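(* Let $\theta_1,\dots,\theta_{10}$ be real numbers such that $0<\theta_i<\theta_j<\theta_k<180$ for each of the triples $(i,j,k)\in\{(2,4,6),(1,5,9),(1,5,10),(1,5,7),(1,3,7),(1,4,7),(3,5,8),(2,8,9),(6,7,10)\}$, and write $s_{ij}=\sin(\theta_j-\theta_i)$. Suppose $$s_{89}\,s_{1,10}\,s_{24}\,s_{35}\,s_{67}+s_{46}\,s_{19}\,s_{7,10}\,s_{35}\,s_{28}-s_{46}\,s_{38}\,s_{7,10}\,s_{29}\,s_{15}<0 .$$ Then the $9\times 8$ matrix $$S_9=\begin{pmatrix} 0&-s_{58}&0&s_{38}&0&-s_{35}&0&0\\ -s_{89}&0&0&0&0&s_{29}&-s_{28}&0\\ s_{46}&0&-s_{26}&0&s_{24}&0&0&0\\ 0&0&0&0&-s_{7,10}&0&0&-s_{67}\\ 0&s_{17}&0&0&0&0&0&0\\ 0&0&s_{17}&0&0&0&0&0\\ 0&0&0&-s_{19}&0&0&s_{15}&0\\ 0&0&0&-s_{1,10}&0&0&0&s_{15}\\ 0&0&0&-s_{17}&0&0&0&0 \end{pmatrix}$$ is a simplex.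
   Context: Angles are in degrees. A real matrix with $r+1$ rows and $r$ columns is called a simplex if, up to multiplication by a constant, there is precisely one positive linear dependency between its rows, i.e. there is a linear dependency among the rows with all coefficients strictly positive, and every linear dependency among the rows is a scalar multiple of it. (The columns of $S_9$ correspond to the unknowns $r_2,r_3,r_4,r_5,r_6,r_8,r_9,r_{10}$ in the triangle inequalities of a ten-line arrangement.) *)

theory Defs
  imports Complex_Main
begin

text \<open>A real matrix with m rows and n columns is represented as a function
  A :: nat => nat => real, where A i j is the entry in row i, column j
  (0-based, i < m, j < n).\<close>

definition row_dependency :: "nat \<Rightarrow> nat \<Rightarrow> (nat \<Rightarrow> nat \<Rightarrow> real) \<Rightarrow> (nat \<Rightarrow> real) \<Rightarrow> bool" where
  "row_dependency m n A c \<longleftrightarrow> (\<forall>j<n. (\<Sum>i<m. c i * A i j) = 0)"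

definition simplex :: "nat \<Rightarrow> (nat \<Rightarrow> nat \<Rightarrow> real) \<Rightarrow> bool" where
  "simplex r A \<longleftrightarrow>
     (\<exists>c. row_dependency (r+1) r A c \<and> (\<forall>i<r+1. c i > 0) \<and>
          (\<forall>d. row_dependency (r+1) r A d \<longrightarrow> (\<exists>t. \<forall>i<r+1. d i = t * c i)))"

definition sdeg :: "(nat \<Rightarrow> real) \<Rightarrow> nat \<Rightarrow> nat \<Rightarrow> real" where
  "sdeg \<theta> i j = sin ((\<theta> j - \<theta> i) * pi / 180)"

definition S9_rows :: "(nat \<Rightarrow> real) \<Rightarrow> real list list" where
  "S9_rows \<theta> = (let s = sdeg \<theta> in
    [[0, - s 5 8, 0, s 3 8, 0, - s 3 5, 0, 0],
     [- s 8 9, 0, 0, 0, 0, s 2 9, - s 2 8, 0],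
     [s 4 6, 0, - s 2 6, 0, s 2 4, 0, 0, 0],
     [0, 0, 0, 0, - s 7 10, 0, 0, - s 6 7],
     [0, s 1 7, 0, 0, 0, 0, 0, 0],
     [0, 0, s 1 7, 0, 0, 0, 0, 0],
     [0, 0, 0, - s 1 9, 0, 0, s 1 5, 0],
     [0, 0, 0, - s 1 10, 0, 0, 0, s 1 5],
     [0, 0, 0, - s 1 7, 0, 0, 0, 0]])"

definition S9 :: "(nat \<Rightarrow> real) \<Rightarrow> nat \<Rightarrow> nat \<Rightarrow> real" where
  "S9 \<theta> i j = S9_rows \<theta> ! i ! j"

end

theory Submission
  imports Defs
begin

text \<open>The eight columns of S9 give eight linear equations for a row dependency c, and they
  form a triangular system: c 1, ..., c 8 are determined in turn by c 0, each step dividing by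
  the sine of an angle strictly between 0 and 180 degrees. So the dependencies form a line.
  Clearing denominators, the dependency spanning it has polynomial entries in the sines; all
  but the last are products of positive sines, and the last is minus the expression assumed
  negative.\<close>

lemma simplexI:
  assumes dep: "row_dependency (r+1) r A w"
    and pos: "\<forall>i<r+1. 0 < w i"
    and k: "k < r+1"
    and pivot: "\<And>d. row_dependency (r+1) r A d \<Longrightarrow> d k = 0 \<Longrightarrow> \<forall>i<r+1. d i = 0"
  shows "simplex r A"
proof -
  have "\<exists>t. \<forall>i<r+1. d i = t * w i" if d: "row_dependency (r+1) r A d" for d
  proof -
    define t where "t = d k / w k"
    have "row_dependency (r+1) r A (\<lambda>i. d i - t * w i)"
      using d dep
      by (simp add: row_dependency_def left_diff_distrib sum_subtractf mult.assoc
          flip: sum_distrib_left)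
    moreover have "d k - t * w k = 0"
      using pos k by (simp add: t_def less_imp_neq[symmetric])
    ultimately show ?thesis
      using pivot by fastforce
  qed
  then show ?thesis
    using dep pos unfolding simplex_def by blast
qed

lemma sdeg_pos:
  assumes "\<theta> i < \<theta> j" "\<theta> j < \<theta> i + 180"
  shows "0 < sdeg \<theta> i j"
  unfolding sdeg_def
proof (rule sin_gt_zero)
  show "0 < (\<theta> j - \<theta> i) * pi / 180"
    using assms by simp
  show "(\<theta> j - \<theta> i) * pi / 180 < pi"
    using assms by (simp add: divide_less_eq)
qed

lemma all_less_numeral_nat:
  "(\<forall>j < numeral k. P j) \<longleftrightarrow> P (pred_numeral k) \<and> (\<forall>j < pred_numeral k. P (j::nat))"
  by (simp only: numeral_eq_Suc All_less_Suc)

lemma row_dependency_S9_iff: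
  "row_dependency 9 8 (S9 \<theta>) c \<longleftrightarrow>
     c 1 * sdeg \<theta> 2 9 = c 0 * sdeg \<theta> 3 5 \<and>
     c 2 * sdeg \<theta> 4 6 = c 1 * sdeg \<theta> 8 9 \<and>
     c 3 * sdeg \<theta> 7 10 = c 2 * sdeg \<theta> 2 4 \<and>
     c 4 * sdeg \<theta> 1 7 = c 0 * sdeg \<theta> 5 8 \<and>
     c 5 * sdeg \<theta> 1 7 = c 2 * sdeg \<theta> 2 6 \<and>
     c 6 * sdeg \<theta> 1 5 = c 1 * sdeg \<theta> 2 8 \<and>
     c 7 * sdeg \<theta> 1 5 = c 3 * sdeg \<theta> 6 7 \<and>
     c 8 * sdeg \<theta> 1 7 = c 0 * sdeg \<theta> 3 8 - c 6 * sdeg \<theta> 1 9 - c 7 * sdeg \<theta> 1 10"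
  by (simp add: row_dependency_def all_less_numeral_nat lessThan_nat_numeral S9_def S9_rows_def
      Let_def algebra_simps)
    (auto simp: algebra_simps)

lemma row_dependency_S9_eq_0:
  assumes "sdeg \<theta> 2 9 \<noteq> 0" "sdeg \<theta> 4 6 \<noteq> 0" "sdeg \<theta> 7 10 \<noteq> 0" "sdeg \<theta> 1 5 \<noteq> 0"
    "sdeg \<theta> 1 7 \<noteq> 0"
    and "row_dependency 9 8 (S9 \<theta>) d" "d 0 = 0"
  shows "\<forall>i<9. d i = 0"
  using assms by (auto simp: row_dependency_S9_iff all_less_numeral_nat)

text \<open>Back substitution in the equations of row_dependency_S9_iff, starting from
  c 0 = s29 s46 s7,10 s15 s17.\<close>

definition S9_dependency :: "(nat \<Rightarrow> real) \<Rightarrow> nat \<Rightarrow> real" where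
  "S9_dependency \<theta> i = (let s = sdeg \<theta> in
     [s 2 9 * s 4 6 * s 7 10 * s 1 5 * s 1 7,
      s 3 5 * s 4 6 * s 7 10 * s 1 5 * s 1 7,
      s 3 5 * s 8 9 * s 7 10 * s 1 5 * s 1 7,
      s 3 5 * s 8 9 * s 2 4 * s 1 5 * s 1 7,
      s 5 8 * s 2 9 * s 4 6 * s 7 10 * s 1 5,
      s 3 5 * s 8 9 * s 2 6 * s 7 10 * s 1 5,
      s 3 5 * s 2 8 * s 4 6 * s 7 10 * s 1 7,
      s 3 5 * s 8 9 * s 2 4 * s 6 7 * s 1 7,
      s 4 6 * s 3 8 * s 7 10 * s 2 9 * s 1 5 - s 8 9 * s 1 10 * s 2 4 * s 3 5 * s 6 7
        - s 4 6 * s 1 9 * s 7 10 * s 3 5 * s 2 8] ! i)"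

lemma row_dependency_S9_dependency: "row_dependency 9 8 (S9 \<theta>) (S9_dependency \<theta>)"
  by (simp add: row_dependency_S9_iff S9_dependency_def Let_def algebra_simps)

lemma S9_dependency_pos:
  assumes "0 < sdeg \<theta> 2 9" "0 < sdeg \<theta> 4 6" "0 < sdeg \<theta> 7 10" "0 < sdeg \<theta> 1 5"
    "0 < sdeg \<theta> 1 7" "0 < sdeg \<theta> 3 5" "0 < sdeg \<theta> 8 9" "0 < sdeg \<theta> 2 4"
    "0 < sdeg \<theta> 5 8" "0 < sdeg \<theta> 2 6" "0 < sdeg \<theta> 2 8" "0 < sdeg \<theta> 6 7"
    and "sdeg \<theta> 8 9 * sdeg \<theta> 1 10 * sdeg \<theta> 2 4 * sdeg \<theta> 3 5 * sdeg \<theta> 6 7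
            + sdeg \<theta> 4 6 * sdeg \<theta> 1 9 * sdeg \<theta> 7 10 * sdeg \<theta> 3 5 * sdeg \<theta> 2 8
            - sdeg \<theta> 4 6 * sdeg \<theta> 3 8 * sdeg \<theta> 7 10 * sdeg \<theta> 2 9 * sdeg \<theta> 1 5 < 0"
  shows "\<forall>i<9. 0 < S9_dependency \<theta> i"
  using assms by (simp add: all_less_numeral_nat S9_dependency_def Let_def)

theorem mainTheorem4:
  fixes \<theta> :: "nat \<Rightarrow> real"
  assumes ord: "\<forall>(i, j, k) \<in> {(2,4,6), (1,5,9), (1,5,10), (1,5,7), (1,3,7), (1,4,7),
                              (3,5,8), (2,8,9), (6,7,10)}.
                 0 < \<theta> i \<and> \<theta> i < \<theta> j \<and> \<theta> j < \<theta> k \<and> \<theta> k < 180"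
    and neg: "sdeg \<theta> 8 9 * sdeg \<theta> 1 10 * sdeg \<theta> 2 4 * sdeg \<theta> 3 5 * sdeg \<theta> 6 7
            + sdeg \<theta> 4 6 * sdeg \<theta> 1 9 * sdeg \<theta> 7 10 * sdeg \<theta> 3 5 * sdeg \<theta> 2 8
            - sdeg \<theta> 4 6 * sdeg \<theta> 3 8 * sdeg \<theta> 7 10 * sdeg \<theta> 2 9 * sdeg \<theta> 1 5 < 0"
  shows "simplex 8 (S9 \<theta>)"
proof -
  have pos: "0 < sdeg \<theta> 2 9" "0 < sdeg \<theta> 4 6" "0 < sdeg \<theta> 7 10" "0 < sdeg \<theta> 1 5"
    "0 < sdeg \<theta> 1 7" "0 < sdeg \<theta> 3 5" "0 < sdeg \<theta> 8 9" "0 < sdeg \<theta> 2 4"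
    "0 < sdeg \<theta> 5 8" "0 < sdeg \<theta> 2 6" "0 < sdeg \<theta> 2 8" "0 < sdeg \<theta> 6 7"
    using ord by (auto intro!: sdeg_pos)
  show ?thesis
  proof (rule simplexI[where k = 0])
    show "row_dependency (8+1) 8 (S9 \<theta>) (S9_dependency \<theta>)"
      using row_dependency_S9_dependency by simp
    show "\<forall>i<8+1. 0 < S9_dependency \<theta> i"
      using S9_dependency_pos[OF pos neg] by simp
    show "\<forall>i<8+1. d i = 0" if "row_dependency (8+1) 8 (S9 \<theta>) d" "d 0 = 0" for d
      using row_dependency_S9_eq_0[of \<theta> d] pos that by simp
  qed simp
qed

end
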